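(* Let $V$ be a finite set partitioned into $A$ and $B$, and for each $u\in V$ let $d_u\ge 1$ and $0\le\lambda_u\le d_u$ be integers. Let $(X_u)_{u\in V}$ be independent random variables with $X_u=d_u$ with probability $\lambda_u/(2d_u)$ and $X_u=0$ otherwise if $u\in B$, and $X_u=-d_u$ with probability $\lambda_u/(2d_u)$ and $X_u=0$ otherwise if $u\in A$. Let $(Y_u)_{u\in V}$ be independent random variables with $Y_u=\lambda_u$ with probability $1/2$ and $Y_u=0$ otherwise if $u\in B$, and $Y_u=-d_u$ with probability $\lambda_u/(2d_u)$ and $Y_u=0$ otherwise if $u\in A$. Let $f$ be a concave and continuous function (defined on an interval containing all possible values of the sums below). Then $\mathbf{E}\big[f\big(\sum_{u\in V}X_u\big)\big]\le\mathbf{E}\big[f\big(\sum_{u\in V}Y_u\big)\big]$. *)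

theory Defs
  imports "HOL-Analysis.Analysis" "HOL-Probability.Probability"
begin

definition Xdist :: "'a set \<Rightarrow> ('a \<Rightarrow> int) \<Rightarrow> ('a \<Rightarrow> int) \<Rightarrow> 'a \<Rightarrow> real pmf" where
  "Xdist B d lam u =
     map_pmf (\<lambda>b. if b then (if u \<in> B then real_of_int (d u) else - real_of_int (d u)) else 0)
             (bernoulli_pmf (real_of_int (lam u) / (2 * real_of_int (d u))))"

definition Ydist :: "'a set \<Rightarrow> ('a \<Rightarrow> int) \<Rightarrow> ('a \<Rightarrow> int) \<Rightarrow> 'a \<Rightarrow> real pmf" where
  "Ydist B d lam u =
     (if u \<in> B then map_pmf (\<lambda>b. if b then real_of_int (lam u) else 0) (bernoulli_pmf (1/2))
      else map_pmf (\<lambda>b. if b then - real_of_int (d u) else 0)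
             (bernoulli_pmf (real_of_int (lam u) / (2 * real_of_int (d u)))))"

end

theory Submission
  imports Defs
begin

text \<open>
  For \<open>u \<in> A\<close> the variables \<open>X\<^sub>u\<close> and \<open>Y\<^sub>u\<close> have the same law. For \<open>u \<in> B\<close> put
  \<open>t = \<lambda>\<^sub>u / d\<^sub>u \<in> [0, 1]\<close>; for every shift \<open>c\<close>, concavity gives
  \<open>t f(c + d\<^sub>u) + (1 - t) f(c) \<le> f(c + t d\<^sub>u)\<close>, and averaging with \<open>f(c)\<close> yields
  \<open>E f(c + X\<^sub>u) \<le> E f(c + Y\<^sub>u)\<close>. By independence and Fubini the coordinates of the
  product distribution can be replaced by those of the other one at a time, each time
  conditioning on the remaining coordinates, which play the role of \<open>c\<close>.
\<close>

lemma expectation_finite_support: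
  fixes g :: "'a \<Rightarrow> real"
  assumes "finite (set_pmf p)"
  shows "measure_pmf.expectation p g = (\<Sum>x\<in>set_pmf p. g x * pmf p x)"
  by (rule integral_measure_pmf_real) (auto simp: assms)

lemma expectation_mono_finite_support:
  fixes g h :: "'a \<Rightarrow> real"
  assumes "finite (set_pmf p)" "\<And>x. x \<in> set_pmf p \<Longrightarrow> g x \<le> h x"
  shows "measure_pmf.expectation p g \<le> measure_pmf.expectation p h"
  unfolding expectation_finite_support[OF assms(1)]
  by (intro sum_mono mult_right_mono assms) auto

lemma expectation_pair_pmf_finite_support:
  fixes g :: "'a \<times> 'b \<Rightarrow> real"
  assumes "finite (set_pmf p)" "finite (set_pmf q)"
  shows "measure_pmf.expectation (pair_pmf p q) g
       = measure_pmf.expectation p (\<lambda>x. measure_pmf.expectation q (\<lambda>y. g (x, y)))"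
proof -
  have "measure_pmf.expectation (pair_pmf p q) g
      = (\<Sum>z\<in>set_pmf p \<times> set_pmf q. g z * pmf (pair_pmf p q) z)"
    by (rule integral_measure_pmf_real) (auto simp: assms)
  also have "\<dots> = (\<Sum>x\<in>set_pmf p. \<Sum>y\<in>set_pmf q. g (x, y) * (pmf p x * pmf q y))"
    unfolding sum.cartesian_product by (intro sum.cong refl) (auto simp: pmf_pair)
  also have "\<dots> = (\<Sum>x\<in>set_pmf p. (\<Sum>y\<in>set_pmf q. g (x, y) * pmf q y) * pmf p x)"
    by (simp add: sum_distrib_left sum_distrib_right mult_ac)
  finally show ?thesis
    by (simp add: expectation_finite_support assms)
qed

lemma expectation_swap_finite_support:
  fixes g :: "'a \<Rightarrow> 'b \<Rightarrow> real"
  assumes "finite (set_pmf p)" "finite (set_pmf q)"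
  shows "measure_pmf.expectation p (\<lambda>x. measure_pmf.expectation q (g x))
       = measure_pmf.expectation q (\<lambda>y. measure_pmf.expectation p (\<lambda>x. g x y))"
  unfolding expectation_finite_support[OF assms(1)] expectation_finite_support[OF assms(2)]
  by (simp add: sum_distrib_left sum_distrib_right mult_ac sum.swap[of _ "set_pmf p"])

lemma finite_set_Pi_pmf:
  assumes "finite A" "\<And>x. x \<in> A \<Longrightarrow> finite (set_pmf (p x))"
  shows "finite (set_pmf (Pi_pmf A dflt p))"
  using assms by (induction A rule: finite_induct) (simp_all add: Pi_pmf_insert)

lemma in_set_Pi_pmfI:
  assumes "finite A" "\<And>x. x \<in> A \<Longrightarrow> g x \<in> set_pmf (p x)"
  shows "(\<lambda>x. if x \<in> A then g x else dflt) \<in> set_pmf (Pi_pmf A dflt p)"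
  using assms by (simp add: set_Pi_pmf PiE_dflt_def)

lemma sum_in_set_Pi_pmf_bounds:
  fixes p :: "'a \<Rightarrow> real pmf"
  assumes "finite A" "\<And>x t. x \<in> A \<Longrightarrow> t \<in> set_pmf (p x) \<Longrightarrow> lo x \<le> t \<and> t \<le> hi x"
    and "y \<in> set_pmf (Pi_pmf A 0 p)"
  shows "(\<Sum>x\<in>A. lo x) \<le> (\<Sum>x\<in>A. y x) \<and> (\<Sum>x\<in>A. y x) \<le> (\<Sum>x\<in>A. hi x)"
proof -
  have "y x \<in> set_pmf (p x)" if "x \<in> A" for x
    using assms(3) that by (simp add: set_Pi_pmf[OF assms(1)] PiE_dflt_def)
  with assms(2) show ?thesis by (auto intro!: sum_mono)
qed

lemma expectation_Pi_pmf_insert_sum: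
  fixes p :: "'a \<Rightarrow> real pmf" and f :: "real \<Rightarrow> real"
  assumes "finite A" "a \<notin> A"
    and "finite (set_pmf (p a))" "finite (set_pmf (Pi_pmf A 0 p))"
  shows "measure_pmf.expectation (Pi_pmf (insert a A) 0 p) (\<lambda>x. f (s + (\<Sum>u\<in>insert a A. x u)))
       = measure_pmf.expectation (p a)
           (\<lambda>t. measure_pmf.expectation (Pi_pmf A 0 p) (\<lambda>x. f (s + t + (\<Sum>u\<in>A. x u))))"
proof -
  have "(\<Sum>u\<in>insert a A. (x(a := t)) u) = t + (\<Sum>u\<in>A. x u)" for x :: "'a \<Rightarrow> real" and t
    using assms(1,2) by (simp add: sum.insert, intro sum.cong) auto
  then show ?thesis
    using assms
    by (simp add: Pi_pmf_insert expectation_pair_pmf_finite_support case_prod_beta add.assoc)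
qed

lemma add_mem_is_interval_1:
  fixes I :: "real set"
  assumes "is_interval I" "s + a \<in> I" "s + b \<in> I" "a \<le> x" "x \<le> b"
  shows "s + x \<in> I"
  using assms unfolding is_interval_1 by (meson add_left_mono)

lemma expectation_Pi_pmf_sum_mono_shifted:
  fixes p q :: "'a \<Rightarrow> real pmf" and f :: "real \<Rightarrow> real" and lo hi :: "'a \<Rightarrow> real"
  assumes "finite A" and I: "is_interval I"
    and fin: "\<And>u. u \<in> A \<Longrightarrow> finite (set_pmf (p u)) \<and> finite (set_pmf (q u))"
    and bp: "\<And>u t. u \<in> A \<Longrightarrow> t \<in> set_pmf (p u) \<Longrightarrow> lo u \<le> t \<and> t \<le> hi u"
    and bq: "\<And>u t. u \<in> A \<Longrightarrow> t \<in> set_pmf (q u) \<Longrightarrow> lo u \<le> t \<and> t \<le> hi u"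
    and le: "\<And>u c. u \<in> A \<Longrightarrow> c + lo u \<in> I \<Longrightarrow> c + hi u \<in> I \<Longrightarrow>
        measure_pmf.expectation (p u) (\<lambda>t. f (c + t)) \<le> measure_pmf.expectation (q u) (\<lambda>t. f (c + t))"
    and "s + (\<Sum>u\<in>A. lo u) \<in> I" "s + (\<Sum>u\<in>A. hi u) \<in> I"
  shows "measure_pmf.expectation (Pi_pmf A 0 p) (\<lambda>x. f (s + (\<Sum>u\<in>A. x u)))
       \<le> measure_pmf.expectation (Pi_pmf A 0 q) (\<lambda>x. f (s + (\<Sum>u\<in>A. x u)))"
  using assms(1) fin bp bq le assms(7,8)
proof (induction A arbitrary: s rule: finite_induct)
  case empty
  then show ?case by simp
next
  case (insert a A)
  let ?E = "\<lambda>r t. measure_pmf.expectation (Pi_pmf A 0 r) (\<lambda>x. f (s + t + (\<Sum>u\<in>A. x u)))"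
  let ?F = "\<lambda>r x. measure_pmf.expectation (r a) (\<lambda>t. f ((s + (\<Sum>u\<in>A. x u)) + t))"
  have fin_pA: "finite (set_pmf (Pi_pmf A 0 p))" and fin_qA: "finite (set_pmf (Pi_pmf A 0 q))"
    using insert.prems(1) by (auto intro!: finite_set_Pi_pmf insert.hyps)
  have fin_pa: "finite (set_pmf (p a))" and fin_qa: "finite (set_pmf (q a))"
    using insert.prems(1) by auto
  have lo_le_hi: "lo u \<le> hi u" if "u \<in> insert a A" for u
    using insert.prems(2)[OF that] set_pmf_not_empty[of "p u"] by fastforce
  have sum_lo_hi: "s + (lo a + (\<Sum>u\<in>A. lo u)) \<in> I" "s + (hi a + (\<Sum>u\<in>A. hi u)) \<in> I"
    using insert.prems(5,6) insert.hyps by simp_all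
  have IH: "?E p t \<le> ?E q t" if "t \<in> set_pmf (p a)" for t
  proof (rule insert.IH)
    have "(\<Sum>u\<in>A. lo u) \<le> (\<Sum>u\<in>A. hi u)" "lo a \<le> t" "t \<le> hi a"
      using lo_le_hi insert.prems(2) that by (auto intro: sum_mono)
    then show "s + t + (\<Sum>u\<in>A. lo u) \<in> I" "s + t + (\<Sum>u\<in>A. hi u) \<in> I"
      using add_mem_is_interval_1[OF I sum_lo_hi] by (simp_all add: add.assoc)
  qed (simp_all add: insert.prems(1-4))
  have step: "?F p y \<le> ?F q y" if "y \<in> set_pmf (Pi_pmf A 0 q)" for y
  proof (rule insert.prems(4))
    have "(\<Sum>u\<in>A. lo u) \<le> (\<Sum>u\<in>A. y u) \<and> (\<Sum>u\<in>A. y u) \<le> (\<Sum>u\<in>A. hi u)"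
      using insert.prems(3) by (intro sum_in_set_Pi_pmf_bounds[OF insert.hyps(1) _ that]) auto
    then have "s + (lo a + (\<Sum>u\<in>A. y u)) \<in> I" "s + (hi a + (\<Sum>u\<in>A. y u)) \<in> I"
      using lo_le_hi[of a] by (auto intro: add_mem_is_interval_1[OF I sum_lo_hi])
    then show "(s + (\<Sum>u\<in>A. y u)) + lo a \<in> I" "(s + (\<Sum>u\<in>A. y u)) + hi a \<in> I"
      by (simp_all add: ac_simps)
  qed simp
  have "measure_pmf.expectation (Pi_pmf (insert a A) 0 p) (\<lambda>x. f (s + (\<Sum>u\<in>insert a A. x u)))
      = measure_pmf.expectation (p a) (?E p)"
    by (rule expectation_Pi_pmf_insert_sum[OF insert.hyps fin_pa fin_pA])
  also have "\<dots> \<le> measure_pmf.expectation (p a) (?E q)"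
    by (rule expectation_mono_finite_support[OF fin_pa IH])
  also have "\<dots> = measure_pmf.expectation (Pi_pmf A 0 q) (?F p)"
    by (subst expectation_swap_finite_support[OF fin_pa fin_qA]) (simp only: ac_simps)
  also have "\<dots> \<le> measure_pmf.expectation (Pi_pmf A 0 q) (?F q)"
    by (rule expectation_mono_finite_support[OF fin_qA step])
  also have "\<dots> = measure_pmf.expectation (q a) (?E q)"
    by (subst expectation_swap_finite_support[OF fin_qA fin_qa]) (simp only: ac_simps)
  also have "\<dots> = measure_pmf.expectation (Pi_pmf (insert a A) 0 q) (\<lambda>x. f (s + (\<Sum>u\<in>insert a A. x u)))"
    by (rule expectation_Pi_pmf_insert_sum[OF insert.hyps fin_qa fin_qA, symmetric])
  finally show ?case .
qed

lemma expectation_Pi_pmf_sum_mono: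
  fixes p q :: "'a \<Rightarrow> real pmf" and f :: "real \<Rightarrow> real" and lo hi :: "'a \<Rightarrow> real"
  assumes "finite A" and "is_interval I"
    and "\<And>u. u \<in> A \<Longrightarrow> finite (set_pmf (p u)) \<and> finite (set_pmf (q u))"
    and "\<And>u t. u \<in> A \<Longrightarrow> t \<in> set_pmf (p u) \<Longrightarrow> lo u \<le> t \<and> t \<le> hi u"
    and "\<And>u t. u \<in> A \<Longrightarrow> t \<in> set_pmf (q u) \<Longrightarrow> lo u \<le> t \<and> t \<le> hi u"
    and "\<And>u. u \<in> A \<Longrightarrow> lo u \<in> set_pmf (p u) \<and> hi u \<in> set_pmf (p u)"
    and "\<And>x. x \<in> set_pmf (Pi_pmf A 0 p) \<Longrightarrow> (\<Sum>u\<in>A. x u) \<in> I"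
    and "\<And>u c. u \<in> A \<Longrightarrow> c + lo u \<in> I \<Longrightarrow> c + hi u \<in> I \<Longrightarrow>
        measure_pmf.expectation (p u) (\<lambda>t. f (c + t)) \<le> measure_pmf.expectation (q u) (\<lambda>t. f (c + t))"
  shows "measure_pmf.expectation (Pi_pmf A 0 p) (\<lambda>x. f (\<Sum>u\<in>A. x u))
       \<le> measure_pmf.expectation (Pi_pmf A 0 q) (\<lambda>x. f (\<Sum>u\<in>A. x u))"
proof -
  have sum_in_I: "(\<Sum>u\<in>A. e u) \<in> I" if "\<And>u. u \<in> A \<Longrightarrow> e u \<in> set_pmf (p u)" for e
  proof -
    have "(\<Sum>u\<in>A. if u \<in> A then e u else 0) \<in> I"
      by (rule assms(7)[OF in_set_Pi_pmfI[OF assms(1) that]])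
    then show ?thesis by simp
  qed
  have "0 + (\<Sum>u\<in>A. lo u) \<in> I" "0 + (\<Sum>u\<in>A. hi u) \<in> I"
    using sum_in_I[of lo] sum_in_I[of hi] assms(6) by auto
  then show ?thesis
    using expectation_Pi_pmf_sum_mono_shifted[OF assms(1-5,8), where s = 0] by simp
qed

lemma set_pmf_Xdist:
  assumes "1 \<le> d u" "0 \<le> lam u" "lam u \<le> d u"
  shows "set_pmf (Xdist B d lam u) = (if lam u = 0 then {0}
           else {0, if u \<in> B then real_of_int (d u) else - real_of_int (d u)})"
proof -
  let ?p = "real_of_int (lam u) / (2 * real_of_int (d u))"
  have "set_pmf (bernoulli_pmf ?p) = (if lam u = 0 then {False} else UNIV)"
  proof (cases "lam u = 0")
    case False
    with assms have "0 < ?p" "?p < 1" by (simp_all add: field_simps)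
    with False show ?thesis by simp
  qed (auto simp: set_pmf_iff)
  then show ?thesis
    by (auto simp: Xdist_def UNIV_bool)
qed

lemma set_pmf_Ydist:
  assumes "u \<in> B"
  shows "set_pmf (Ydist B d lam u) = {0, real_of_int (lam u)}"
  using assms by (auto simp: Ydist_def UNIV_bool)

lemma Ydist_eq_Xdist:
  assumes "u \<notin> B \<or> lam u = 0"
  shows "Ydist B d lam u = Xdist B d lam u"
proof -
  have "bernoulli_pmf 0 = return_pmf False"
    by (rule pmf_eqI) (simp split: split_indicator)
  with assms show ?thesis
    by (auto simp: Xdist_def Ydist_def map_pmf_const cong: if_cong)
qed

lemma expectation_Xdist_le_Ydist:
  fixes f :: "real \<Rightarrow> real"
  assumes f: "concave_on I f" and "u \<in> B" "1 \<le> d u" "0 \<le> lam u" "lam u \<le> d u"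
    and c: "c \<in> I" "c + real_of_int (d u) \<in> I"
  shows "measure_pmf.expectation (Xdist B d lam u) (\<lambda>x. f (c + x))
       \<le> measure_pmf.expectation (Ydist B d lam u) (\<lambda>x. f (c + x))"
proof -
  define r where "r = real_of_int (lam u) / real_of_int (d u)"
  have r: "0 \<le> r" "r \<le> 1" and lam_eq: "real_of_int (lam u) = r * real_of_int (d u)"
    using assms(3-5) by (simp_all add: r_def field_simps)
  have "measure_pmf.expectation (Xdist B d lam u) (\<lambda>x. f (c + x))
      = (r * f (c + real_of_int (d u)) + (1 - r) * f c) / 2 + f c / 2"
    using \<open>u \<in> B\<close> r by (simp add: Xdist_def r_def field_simps)
  also have "\<dots> \<le> f (c + r * real_of_int (d u)) / 2 + f c / 2"
    using concave_onD[OF f r c] by (simp add: algebra_simps)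
  also have "\<dots> = measure_pmf.expectation (Ydist B d lam u) (\<lambda>x. f (c + x))"
    using \<open>u \<in> B\<close> by (simp add: Ydist_def lam_eq)
  finally show ?thesis .
qed

theorem lemma10:
  fixes V A B :: "'a set" and d lam :: "'a \<Rightarrow> int" and f :: "real \<Rightarrow> real" and I :: "real set"
  assumes "finite V" and "A \<union> B = V" and "A \<inter> B = {}"
    and "\<And>u. u \<in> V \<Longrightarrow> d u \<ge> 1"
    and "\<And>u. u \<in> V \<Longrightarrow> 0 \<le> lam u \<and> lam u \<le> d u"
    and "is_interval I" and "concave_on I f" and "continuous_on I f"
    and "\<And>x. x \<in> set_pmf (Pi_pmf V 0 (Xdist B d lam)) \<Longrightarrow> (\<Sum>u\<in>V. x u) \<in> I"
    and "\<And>y. y \<in> set_pmf (Pi_pmf V 0 (Ydist B d lam)) \<Longrightarrow> (\<Sum>u\<in>V. y u) \<in> I"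
  shows "measure_pmf.expectation (Pi_pmf V 0 (Xdist B d lam)) (\<lambda>x. f (\<Sum>u\<in>V. x u))
         \<le> measure_pmf.expectation (Pi_pmf V 0 (Ydist B d lam)) (\<lambda>y. f (\<Sum>u\<in>V. y u))"
proof -
  \<comment> \<open>\<open>lo u\<close> and \<open>hi u\<close> are the extreme values of \<open>X\<^sub>u\<close>.\<close>
  define lo where "lo u = (if u \<in> B \<or> lam u = 0 then 0 else - real_of_int (d u))" for u
  define hi where "hi u = (if u \<in> B \<and> lam u \<noteq> 0 then real_of_int (d u) else 0)" for u
  show ?thesis
  proof (rule expectation_Pi_pmf_sum_mono[where lo = lo and hi = hi, OF assms(1,6) _ _ _ _ assms(9)])
    fix u assume "u \<in> V"
    then have d: "1 \<le> d u" and lam: "0 \<le> lam u" "lam u \<le> d u" using assms(4,5) by auto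
    note X = set_pmf_Xdist[where B = B and d = d and lam = lam and u = u, OF d lam]
    note Y = set_pmf_Ydist Ydist_eq_Xdist
    show "finite (set_pmf (Xdist B d lam u)) \<and> finite (set_pmf (Ydist B d lam u))"
      by (cases "u \<in> B") (simp_all add: X Y)
    show "lo u \<le> t \<and> t \<le> hi u" if "t \<in> set_pmf (Xdist B d lam u)" for t
      using that d by (auto simp: X lo_def hi_def split: if_splits)
    show "lo u \<le> t \<and> t \<le> hi u" if "t \<in> set_pmf (Ydist B d lam u)" for t
      using that d lam by (cases "u \<in> B") (auto simp: X Y lo_def hi_def split: if_splits)
    show "lo u \<in> set_pmf (Xdist B d lam u) \<and> hi u \<in> set_pmf (Xdist B d lam u)"
      by (auto simp: X lo_def hi_def)
    show "measure_pmf.expectation (Xdist B d lam u) (\<lambda>t. f (c + t))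
        \<le> measure_pmf.expectation (Ydist B d lam u) (\<lambda>t. f (c + t))"
      if "c + lo u \<in> I" "c + hi u \<in> I" for c
    proof (cases "u \<notin> B \<or> lam u = 0")
      case False
      with that show ?thesis
        by (intro expectation_Xdist_le_Ydist[where d = d and lam = lam and u = u, OF assms(7) _ d lam])
          (auto simp: lo_def hi_def)
    qed (simp add: Ydist_eq_Xdist)
  qed
qed

end
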